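(* Let $m,n,r,t$ be positive integers and let $E(K_n)=E_1\cup\dots\cup E_t$ be a partition of the edge set of $K_n$. Let $I$ be a random subset of $[t]$ in which each element is included independently with probability $1/r$, and suppose that \[ \mathbb{P}[\chi(\mathcal{G}_I)\ge r+1]\le \frac{1}{2m}. \] Then $g(m,n)\le r$ and $G(r)\ge\min\{m,n\}+1$.
   Context: For $I\subseteq[t]$, $\mathcal{G}_I$ is the spanning subgraph of $K_n$ with edge set $\bigcup_{i\in I}E_i$; $\chi$ is chromatic number. The grid graph $\Gamma_{m,n}$ has vertex set $[m]\times[n]$, distinct vertices $(i,j),(i',j')$ adjacent iff $i=i'$ or $j=j'$. A rectangle is the induced subgraph on $\{(i,j),(i',j),(i,j'),(i',j')\}$ with $i<i'$, $j<j'$; in an edge coloring it is alternating if $\{(i,j),(i',j)\}$ and $\{(i,j'),(i',j')\}$ share a color and $\{(i,j),(i,j')\}$ and $\{(i',j),(i',j')\}$ share a color. $g(m,n)$ is the minimum $r$ for which some $r$-coloring of the edges of $\Gamma_{m,n}$ has no alternating rectangle; $G(r)$ is the minimum $n$ such that every $r$-coloring of the edges of $\Gamma_{n,n}$ has an alternating rectangle. *)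

theory Defs
  imports Complex_Main "HOL-Library.Extended_Nat"
begin

definition Kn_edges :: "nat \<Rightarrow> nat set set" where
  "Kn_edges n = {{u, v} | u v. u \<in> {1..n} \<and> v \<in> {1..n} \<and> u \<noteq> v}"

definition is_edge_partition :: "nat \<Rightarrow> nat \<Rightarrow> (nat \<Rightarrow> nat set set) \<Rightarrow> bool" where
  "is_edge_partition n t E \<longleftrightarrow>
     (\<Union>i\<in>{1..t}. E i) = Kn_edges n \<and>
     (\<forall>i\<in>{1..t}. \<forall>j\<in>{1..t}. i \<noteq> j \<longrightarrow> E i \<inter> E j = {})"

definition colorable :: "'a set \<Rightarrow> 'a set set \<Rightarrow> nat \<Rightarrow> bool" where
  "colorable V Es k \<longleftrightarrow>
     (\<exists>f :: 'a \<Rightarrow> nat. (\<forall>v\<in>V. f v < k) \<and> (\<forall>u v. {u, v} \<in> Es \<longrightarrow> u \<noteq> v \<longrightarrow> f u \<noteq> f v))"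

definition chromatic_number :: "'a set \<Rightarrow> 'a set set \<Rightarrow> nat" where
  "chromatic_number V Es = (LEAST k. colorable V Es k)"

definition GI_edges :: "(nat \<Rightarrow> nat set set) \<Rightarrow> nat set \<Rightarrow> nat set set" where
  "GI_edges E I = (\<Union>i\<in>I. E i)"

text \<open>Probability that a random subset I of [t] (each element independently with
  probability p) satisfies P, written out as a finite sum.\<close>
definition rand_subset_prob :: "nat \<Rightarrow> real \<Rightarrow> (nat set \<Rightarrow> bool) \<Rightarrow> real" where
  "rand_subset_prob t p P =
     (\<Sum>I\<in>{I. I \<subseteq> {1..t} \<and> P I}. p ^ card I * (1 - p) ^ (t - card I))"

definition grid_vertices :: "nat \<Rightarrow> nat \<Rightarrow> (nat \<times> nat) set" where
  "grid_vertices m n = {1..m} \<times> {1..n}"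

definition grid_edges :: "nat \<Rightarrow> nat \<Rightarrow> (nat \<times> nat) set set" where
  "grid_edges m n = {{x, y} | x y. x \<in> grid_vertices m n \<and> y \<in> grid_vertices m n \<and> x \<noteq> y \<and>
                                  (fst x = fst y \<or> snd x = snd y)}"

definition edge_coloring :: "nat \<Rightarrow> nat \<Rightarrow> nat \<Rightarrow> ((nat \<times> nat) set \<Rightarrow> nat) \<Rightarrow> bool" where
  "edge_coloring m n r c \<longleftrightarrow> (\<forall>e\<in>grid_edges m n. c e < r)"

definition has_alternating_rectangle :: "nat \<Rightarrow> nat \<Rightarrow> ((nat \<times> nat) set \<Rightarrow> nat) \<Rightarrow> bool" where
  "has_alternating_rectangle m n c \<longleftrightarrow>
     (\<exists>i i' j j'. 1 \<le> i \<and> i < i' \<and> i' \<le> m \<and> 1 \<le> j \<and> j < j' \<and> j' \<le> n \<and>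
        c {(i, j), (i', j)} = c {(i, j'), (i', j')} \<and>
        c {(i, j), (i, j')} = c {(i', j), (i', j')})"

definition g_fun :: "nat \<Rightarrow> nat \<Rightarrow> nat" where
  "g_fun m n = (LEAST r. \<exists>c. edge_coloring m n r c \<and> \<not> has_alternating_rectangle m n c)"

text \<open>G(r) as an extended natural (infinity if no such n exists; the minimum otherwise).\<close>
definition G_fun :: "nat \<Rightarrow> enat" where
  "G_fun r = (INF n\<in>{n. \<forall>c. edge_coloring n n r c \<longrightarrow> has_alternating_rectangle n n c}. enat n)"

end

theory Submission
  imports Defs "HOL-Library.Product_Lexorder" "HOL-Library.FuncSet"
begin

text \<open>Choose words x_1, ..., x_m in [r]^t. For fixed x_i, the set of coordinates on which a
  uniformly random word agrees with x_i is a random subset of [t] of density 1/r, so by hypothesis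
  at most a 1/(2m) fraction of all words y make the agreement graph G_I not r-colourable; hence
  the words can be chosen greedily with every pairwise agreement graph r-colourable. Colour the
  grid edge {(i,j),(i,j')} by x_i at the part containing {j,j'}, and the edges between rows
  i < i' by a proper r-colouring of the agreement graph of x_i and x_i'. In an alternating
  rectangle the two row edges have equal colours, so the part of {j,j'} lies in the agreement
  set, {j,j'} is an edge of that graph, and the two column edges cannot have equal colours.\<close>

lemma card_PiE_agreement_set:
  assumes S: "finite S" and A: "finite A" and a: "a \<in> PiE S (\<lambda>_. A)" and I: "I \<subseteq> S"
  shows "card {b \<in> PiE S (\<lambda>_. A). {s\<in>S. a s = b s} = I} = (card A - 1) ^ (card S - card I)"
proof -
  have aA: "a s \<in> A" if "s \<in> S" for s
    using a that by (auto simp: PiE_def Pi_def)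
  have "{b \<in> PiE S (\<lambda>_. A). {s\<in>S. a s = b s} = I}
      = PiE S (\<lambda>s. if s \<in> I then {a s} else A - {a s})"
    using I aA by (auto simp: PiE_def Pi_def extensional_def split: if_splits)
  then have "card {b \<in> PiE S (\<lambda>_. A). {s\<in>S. a s = b s} = I}
      = (\<Prod>s\<in>S. card (if s \<in> I then {a s} else A - {a s}))"
    using S A by (simp add: card_PiE)
  also have "\<dots> = (\<Prod>s\<in>S. if s \<in> I then 1 else card A - 1)"
    using A aA by (intro prod.cong) auto
  also have "\<dots> = (card A - 1) ^ card (S - I)"
    using S by (simp add: prod.If_cases Diff_eq)
  also have "card (S - I) = card S - card I"
    using S I by (simp add: card_Diff_subset finite_subset)
  finally show ?thesis .
qed

lemma binomial_weight_inverse: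
  fixes r t k :: nat
  assumes "r > 0" "k \<le> t"
  shows "real ((r - 1) ^ (t - k)) = real r ^ t * ((1 / real r) ^ k * (1 - 1 / real r) ^ (t - k))"
proof -
  have "1 - 1 / real r = real (r - 1) / real r"
    using assms by (simp add: of_nat_diff field_simps)
  moreover have "real r ^ t = real r ^ k * real r ^ (t - k)"
    using assms by (simp flip: power_add)
  ultimately show ?thesis
    using assms by (simp add: power_divide field_simps)
qed

lemma card_agreement_eq_rand_subset_prob:
  assumes a: "a \<in> PiE {1..t} (\<lambda>_. {..<r})" and r: "r > 0"
  shows "real (card {b \<in> PiE {1..t} (\<lambda>_. {..<r}). P {s\<in>{1..t}. a s = b s}})
       = real r ^ t * rand_subset_prob t (1 / real r) P"
proof -
  define X where "X = PiE {1..t} (\<lambda>_. {..<r})"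
  define agree where "agree b = {s\<in>{1..t}. a s = b s}" for b
  define Bad where "Bad = {I. I \<subseteq> {1..t} \<and> P I}"
  have fin_Bad: "finite Bad"
    unfolding Bad_def by (rule finite_subset[of _ "Pow {1..t}"]) auto
  define S where "S = {b \<in> X. P (agree b)}"
  have fin_S: "finite S"
    by (simp add: S_def X_def finite_PiE)
  have "card S = (\<Sum>b\<in>S. 1)"
    by (rule card_eq_sum)
  also have "\<dots> = (\<Sum>I\<in>Bad. \<Sum>b\<in>{b. b \<in> S \<and> agree b = I}. 1)"
    using fin_S fin_Bad by (intro sum.group[symmetric]) (auto simp: S_def Bad_def agree_def)
  also have "\<dots> = (\<Sum>I\<in>Bad. card {b \<in> X. agree b = I})"
    by (intro sum.cong) (auto simp: S_def Bad_def intro!: arg_cong[where f = card])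
  also have "\<dots> = (\<Sum>I\<in>Bad. (r - 1) ^ (t - card I))"
    using card_PiE_agreement_set[OF _ _ a] by (intro sum.cong) (auto simp: X_def agree_def Bad_def)
  finally have "real (card S) = (\<Sum>I\<in>Bad. real ((r - 1) ^ (t - card I)))"
    by simp
  also have "\<dots> = (\<Sum>I\<in>Bad. real r ^ t * ((1 / real r) ^ card I * (1 - 1 / real r) ^ (t - card I)))"
    using card_mono[of "{1..t}"] r by (intro sum.cong binomial_weight_inverse) (auto simp: Bad_def)
  finally show ?thesis
    by (simp add: S_def X_def agree_def rand_subset_prob_def Bad_def sum_distrib_left)
qed

lemma greedy_sequence_avoiding:
  assumes X: "finite X"
    and deg: "\<And>a. a \<in> X \<Longrightarrow> card {b \<in> X. R a b} \<le> d"
    and sparse: "(m - 1) * d < card X"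
  shows "\<exists>xs. (\<forall>i\<in>{1..m}. xs i \<in> X) \<and> (\<forall>i\<in>{1..m}. \<forall>i'\<in>{1..m}. i < i' \<longrightarrow> \<not> R (xs i) (xs i'))"
proof -
  have "\<exists>xs. (\<forall>i\<in>{1..k}. xs i \<in> X) \<and> (\<forall>i\<in>{1..k}. \<forall>i'\<in>{1..k}. i < i' \<longrightarrow> \<not> R (xs i) (xs i'))"
    if "k \<le> m" for k
    using that
  proof (induction k)
    case 0
    then show ?case by auto
  next
    case (Suc k)
    then obtain xs where xs_X: "\<forall>i\<in>{1..k}. xs i \<in> X"
      and xs_good: "\<forall>i\<in>{1..k}. \<forall>i'\<in>{1..k}. i < i' \<longrightarrow> \<not> R (xs i) (xs i')"
      by auto
    define U where "U = (\<Union>i\<in>{1..k}. {b \<in> X. R (xs i) b})"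
    have "card U \<le> (\<Sum>i\<in>{1..k}. card {b \<in> X. R (xs i) b})"
      unfolding U_def by (rule card_UN_le) simp
    also have "\<dots> \<le> k * d"
      using sum_mono[of "{1..k}" "\<lambda>i. card {b \<in> X. R (xs i) b}" "\<lambda>_. d"] deg xs_X by simp
    also have "\<dots> \<le> (m - 1) * d"
      using Suc.prems by (intro mult_right_mono) auto
    finally have "card U < card X"
      using sparse by linarith
    moreover have "finite U"
      using X by (simp add: U_def)
    ultimately have "\<not> X \<subseteq> U"
      using card_mono by (meson not_le)
    then obtain b where b: "b \<in> X" "b \<notin> U"
      by blast
    have "\<forall>i\<in>{1..Suc k}. (xs(Suc k := b)) i \<in> X"
      using xs_X b by auto
    moreover have "\<forall>i\<in>{1..Suc k}. \<forall>i'\<in>{1..Suc k}. i < i' \<longrightarrow> \<not> R ((xs(Suc k := b)) i) ((xs(Suc k := b)) i')"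
      using xs_good b by (auto simp: U_def le_Suc_eq)
    ultimately show ?case by blast
  qed
  then show ?thesis by blast
qed

lemma card_agreement_mult_le:
  assumes a: "a \<in> PiE {1..t} (\<lambda>_. {..<r})" and r: "r > 0" and m: "m > 0"
    and prob: "rand_subset_prob t (1 / real r) P \<le> 1 / (2 * real m)"
  shows "card {b \<in> PiE {1..t} (\<lambda>_. {..<r}). P {s\<in>{1..t}. a s = b s}} * (2 * m) \<le> r ^ t"
proof -
  have "real (card {b \<in> PiE {1..t} (\<lambda>_. {..<r}). P {s\<in>{1..t}. a s = b s}})
      \<le> real r ^ t * (1 / (2 * real m))"
    unfolding card_agreement_eq_rand_subset_prob[OF a r] using prob by (intro mult_left_mono) auto
  then have "real (card {b \<in> PiE {1..t} (\<lambda>_. {..<r}). P {s\<in>{1..t}. a s = b s}}) * real (2 * m)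
      \<le> real (r ^ t)"
    using m by (simp add: pos_le_divide_eq)
  then show ?thesis
    by (simp only: of_nat_mult [symmetric] of_nat_le_iff)
qed

lemma exists_words_avoiding_agreement:
  assumes r: "r > 0" and m: "m > 0"
    and prob: "rand_subset_prob t (1 / real r) P \<le> 1 / (2 * real m)"
  shows "\<exists>x. (\<forall>i\<in>{1..m}. x i \<in> PiE {1..t} (\<lambda>_. {..<r})) \<and>
    (\<forall>i\<in>{1..m}. \<forall>i'\<in>{1..m}. i < i' \<longrightarrow> \<not> P {s\<in>{1..t}. x i s = x i' s})"
proof (rule greedy_sequence_avoiding)
  define d where "d = r ^ t div (2 * m)"
  show "finite (PiE {1..t} (\<lambda>_. {..<r}))"
    by (simp add: finite_PiE)
  show "card {b \<in> PiE {1..t} (\<lambda>_. {..<r}). P {s\<in>{1..t}. a s = b s}} \<le> d"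
    if "a \<in> PiE {1..t} (\<lambda>_. {..<r})" for a
    unfolding d_def using card_agreement_mult_le[OF that r m prob] m
    by (simp add: less_eq_div_iff_mult_less_eq)
  have "2 * (m * d) \<le> r ^ t"
    unfolding d_def mult.assoc [symmetric] by (rule times_div_less_eq_dividend)
  moreover have "(m - 1) * d \<le> m * d"
    by (rule mult_le_mono1) simp
  moreover have "card (PiE {1..t} (\<lambda>_. {..<r})) = r ^ t" "r ^ t > 0"
    using r by (simp_all add: card_PiE)
  ultimately show "(m - 1) * d < card (PiE {1..t} (\<lambda>_. {..<r}))"
    by linarith
qed

lemma colorable_mono:
  assumes "colorable V Es k" "k \<le> l"
  shows "colorable V Es l"
  using assms unfolding colorable_def by (meson order_less_le_trans)

lemma colorable_if_chromatic_number_le: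
  assumes "colorable V Es k" "chromatic_number V Es \<le> l"
  shows "colorable V Es l"
proof -
  have "colorable V Es (chromatic_number V Es)"
    unfolding chromatic_number_def using assms(1) by (rule LeastI)
  then show ?thesis
    using assms(2) by (rule colorable_mono)
qed

lemma colorable_Kn_subgraph:
  assumes "Es \<subseteq> Kn_edges n"
  shows "colorable {1..n} Es n"
  unfolding colorable_def
proof (intro exI[of _ "\<lambda>v. v - 1"] conjI ballI allI impI)
  fix u v
  assume "{u, v} \<in> Es" "u \<noteq> v"
  then have "u \<in> {1..n}" "v \<in> {1..n}"
    using assms unfolding Kn_edges_def by (auto simp: doubleton_eq_iff)
  then show "u - 1 \<noteq> v - 1"
    using \<open>u \<noteq> v\<close> by auto
qed auto

lemma GI_edges_subset_Kn_edges:
  assumes "is_edge_partition n t E" "I \<subseteq> {1..t}"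
  shows "GI_edges E I \<subseteq> Kn_edges n"
  using assms unfolding is_edge_partition_def GI_edges_def by blast

lemma colorable_GI_edges_if_chromatic_number_le:
  assumes "is_edge_partition n t E" "I \<subseteq> {1..t}" "chromatic_number {1..n} (GI_edges E I) \<le> r"
  shows "colorable {1..n} (GI_edges E I) r"
  using colorable_Kn_subgraph[OF GI_edges_subset_Kn_edges[OF assms(1,2)]] assms(3)
  by (rule colorable_if_chromatic_number_le)

text \<open>Min and Max are taken in the lexicographic order, so they are the two ends of the edge
  ordered first by row and then by column.\<close>
definition grid_coloring ::
    "(nat \<Rightarrow> nat \<Rightarrow> nat \<Rightarrow> nat) \<Rightarrow> (nat \<Rightarrow> nat \<Rightarrow> nat \<Rightarrow> nat) \<Rightarrow> (nat \<times> nat) set \<Rightarrow> nat" where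
  "grid_coloring row col e =
     (let x = Min e; y = Max e in
      if fst x = fst y then row (fst x) (snd x) (snd y) else col (fst x) (fst y) (snd x))"

lemma grid_coloring_row [simp]:
  "j < j' \<Longrightarrow> grid_coloring row col {(i, j), (i, j')} = row i j j'"
  by (simp add: grid_coloring_def min_def max_def less_eq_prod_def)

lemma grid_coloring_col [simp]:
  "i < i' \<Longrightarrow> grid_coloring row col {(i, j), (i', j)} = col i i' j"
  by (simp add: grid_coloring_def min_def max_def less_eq_prod_def)

lemma grid_edge_cases:
  assumes "e \<in> grid_edges m n"
  obtains (row) i j j' where "e = {(i, j), (i, j')}" "i \<in> {1..m}" "j \<in> {1..n}" "j' \<in> {1..n}" "j < j'"
    | (col) i i' j where "e = {(i, j), (i', j)}" "i \<in> {1..m}" "i' \<in> {1..m}" "j \<in> {1..n}" "i < i'"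
proof -
  obtain a b a' b' where e: "e = {(a, b), (a', b')}" and ab: "(a, b) \<noteq> (a', b')"
    and rng: "a \<in> {1..m}" "b \<in> {1..n}" "a' \<in> {1..m}" "b' \<in> {1..n}"
    and line: "a = a' \<or> b = b'"
    using assms unfolding grid_edges_def grid_vertices_def by auto
  consider "a = a'" "b < b'" | "a = a'" "b' < b" | "b = b'" "a < a'" | "b = b'" "a' < a"
    using ab line by fastforce
  then show thesis
  proof cases
    case 1
    then show ?thesis using e rng by (intro row[of a b b']) simp_all
  next
    case 2
    moreover have "e = {(a, b'), (a, b)}" using e 2 by (simp add: insert_commute)
    ultimately show ?thesis using rng by (intro row[of a b' b]) simp_all
  next
    case 3
    then show ?thesis using e rng by (intro col[of a b a']) simp_all
  next
    case 4
    moreover have "e = {(a', b), (a, b)}" using e 4 by (simp add: insert_commute)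
    ultimately show ?thesis using rng by (intro col[of a' b a]) simp_all
  qed
qed

lemma edge_coloring_grid_coloring:
  assumes "\<And>i j j'. i \<in> {1..m} \<Longrightarrow> j \<in> {1..n} \<Longrightarrow> j' \<in> {1..n} \<Longrightarrow> j < j' \<Longrightarrow> row i j j' < r"
    and "\<And>i i' j. i \<in> {1..m} \<Longrightarrow> i' \<in> {1..m} \<Longrightarrow> j \<in> {1..n} \<Longrightarrow> i < i' \<Longrightarrow> col i i' j < r"
  shows "edge_coloring m n r (grid_coloring row col)"
  unfolding edge_coloring_def
proof
  fix e
  assume "e \<in> grid_edges m n"
  then show "grid_coloring row col e < r"
    by (cases rule: grid_edge_cases) (use assms in auto)
qed

lemma no_alternating_rectangle_grid_coloring:
  assumes "\<And>i i' j j'. 1 \<le> i \<Longrightarrow> i < i' \<Longrightarrow> i' \<le> m \<Longrightarrow> 1 \<le> j \<Longrightarrow> j < j' \<Longrightarrow> j' \<le> n \<Longrightarrow>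
      row i j j' = row i' j j' \<Longrightarrow> col i i' j \<noteq> col i i' j'"
  shows "\<not> has_alternating_rectangle m n (grid_coloring row col)"
  using assms unfolding has_alternating_rectangle_def by auto

lemma edge_coloring_restrict:
  assumes "edge_coloring m n r c" "k \<le> m" "l \<le> n"
  shows "edge_coloring k l r c"
proof -
  have "grid_vertices k l \<subseteq> grid_vertices m n"
    using assms unfolding grid_vertices_def by auto
  then have "grid_edges k l \<subseteq> grid_edges m n"
    unfolding grid_edges_def by blast
  then show ?thesis
    using assms(1) unfolding edge_coloring_def by blast
qed

lemma has_alternating_rectangle_mono:
  assumes "has_alternating_rectangle k l c" "k \<le> m" "l \<le> n"
  shows "has_alternating_rectangle m n c"
  using assms unfolding has_alternating_rectangle_def by (meson le_trans)

lemma g_fun_le: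
  assumes "edge_coloring m n r c" "\<not> has_alternating_rectangle m n c"
  shows "g_fun m n \<le> r"
  unfolding g_fun_def by (rule Least_le) (use assms in blast)

lemma G_fun_gt_min:
  assumes "edge_coloring m n r c" "\<not> has_alternating_rectangle m n c"
  shows "enat (min m n + 1) \<le> G_fun r"
  unfolding G_fun_def
proof (rule INF_greatest)
  fix k
  assume k: "k \<in> {k. \<forall>c. edge_coloring k k r c \<longrightarrow> has_alternating_rectangle k k c}"
  show "enat (min m n + 1) \<le> enat k"
  proof (rule ccontr)
    assume "\<not> enat (min m n + 1) \<le> enat k"
    then have "k \<le> m" "k \<le> n" by auto
    then have "has_alternating_rectangle k k c"
      using k edge_coloring_restrict[OF assms(1)] by blast
    then show False
      using has_alternating_rectangle_mono \<open>k \<le> m\<close> \<open>k \<le> n\<close> assms(2) by blast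
  qed
qed

lemma alternating_free_coloring_from_words:
  assumes part: "is_edge_partition n t E"
    and words: "\<And>i s. i \<in> {1..m} \<Longrightarrow> s \<in> {1..t} \<Longrightarrow> x i s < r"
    and agree_colorable: "\<And>i i'. i \<in> {1..m} \<Longrightarrow> i' \<in> {1..m} \<Longrightarrow> i < i' \<Longrightarrow>
      colorable {1..n} (GI_edges E {s\<in>{1..t}. x i s = x i' s}) r"
  shows "\<exists>c. edge_coloring m n r c \<and> \<not> has_alternating_rectangle m n c"
proof -
  have "\<exists>s\<in>{1..t}. {j, j'} \<in> E s" if "j \<in> {1..n}" "j' \<in> {1..n}" "j \<noteq> j'" for j j'
  proof -
    have "{j, j'} \<in> Kn_edges n"
      using that unfolding Kn_edges_def by blast
    then show ?thesis
      using part unfolding is_edge_partition_def by blast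
  qed
  then obtain p where p: "\<And>j j'. j \<in> {1..n} \<Longrightarrow> j' \<in> {1..n} \<Longrightarrow> j \<noteq> j' \<Longrightarrow>
      p j j' \<in> {1..t} \<and> {j, j'} \<in> E (p j j')"
    by metis
  define col where "col i i' = (SOME f. (\<forall>v\<in>{1..n}. f v < r) \<and>
      (\<forall>u v. {u, v} \<in> GI_edges E {s\<in>{1..t}. x i s = x i' s} \<longrightarrow> u \<noteq> v \<longrightarrow> f u \<noteq> f v))" for i i'
  have col: "(\<forall>v\<in>{1..n}. col i i' v < r) \<and>
      (\<forall>u v. {u, v} \<in> GI_edges E {s\<in>{1..t}. x i s = x i' s} \<longrightarrow> u \<noteq> v \<longrightarrow> col i i' u \<noteq> col i i' v)"
    if "i \<in> {1..m}" "i' \<in> {1..m}" "i < i'" for i i'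
    using agree_colorable[OF that, unfolded colorable_def] unfolding col_def by (rule someI_ex)
  define c where "c = grid_coloring (\<lambda>i j j'. x i (p j j')) col"
  have "edge_coloring m n r c"
    unfolding c_def using words p col by (intro edge_coloring_grid_coloring) auto
  moreover have "\<not> has_alternating_rectangle m n c"
    unfolding c_def
  proof (rule no_alternating_rectangle_grid_coloring)
    fix i i' j j'
    assume rng: "1 \<le> i" "i < i'" "i' \<le> m" "1 \<le> j" "j < j'" "j' \<le> n"
      and "x i (p j j') = x i' (p j j')"
    then have "{j, j'} \<in> GI_edges E {s\<in>{1..t}. x i s = x i' s}"
      using p[of j j'] unfolding GI_edges_def by auto
    then show "col i i' j \<noteq> col i i' j'"
      using col[of i i'] rng by auto
  qed
  ultimately show ?thesis by blast
qed

theorem lemma3p2: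
  fixes m n r t :: nat and E :: "nat \<Rightarrow> nat set set"
  assumes "m > 0" "n > 0" "r > 0" "t > 0"
    and "is_edge_partition n t E"
    and "rand_subset_prob t (1 / real r)
           (\<lambda>I. chromatic_number {1..n} (GI_edges E I) \<ge> r + 1) \<le> 1 / (2 * real m)"
  shows "g_fun m n \<le> r \<and> G_fun r \<ge> enat (min m n + 1)"
proof -
  note m = assms(1) and r = assms(3) and part = assms(5) and prob = assms(6)
  obtain x where x: "\<forall>i\<in>{1..m}. x i \<in> PiE {1..t} (\<lambda>_. {..<r})"
    and good: "\<forall>i\<in>{1..m}. \<forall>i'\<in>{1..m}. i < i' \<longrightarrow>
      \<not> chromatic_number {1..n} (GI_edges E {s\<in>{1..t}. x i s = x i' s}) \<ge> r + 1"
    using exists_words_avoiding_agreement[OF r m prob] by blast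
  have "\<exists>c. edge_coloring m n r c \<and> \<not> has_alternating_rectangle m n c"
  proof (rule alternating_free_coloring_from_words[OF part])
    show "x i s < r" if "i \<in> {1..m}" "s \<in> {1..t}" for i s
      using PiE_mem[of "x i"] x that by fastforce
    show "colorable {1..n} (GI_edges E {s\<in>{1..t}. x i s = x i' s}) r"
      if "i \<in> {1..m}" "i' \<in> {1..m}" "i < i'" for i i'
      using good[rule_format, OF that]
      by (intro colorable_GI_edges_if_chromatic_number_le[OF part]) auto
  qed
  then show ?thesis
    using g_fun_le G_fun_gt_min by blast
qed

end
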